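(* Let $\varphi$ be a finite conjunction of literals of the two forms $x\in y$ and $x = y\setminus z$ (with $x,y,z$ set variables), with finite set of variables $\mathrm{Vars}(\varphi)$. Let $M$ be a set assignment over $\mathrm{Vars}(\varphi)$ satisfying $\varphi$; let $\bar x,\bar y\in\mathrm{Vars}(\varphi)$, let $\overline{M}$ be a set assignment over $\mathrm{Vars}(\varphi)$ satisfying $\varphi$ with $\overline{M}\bar x\neq \overline{M}\bar y$, and let $\mathfrak{t}$ be a set belonging to exactly one of $\overline{M}\bar x$, $\overline{M}\bar y$. Fix a set $\mathfrak{s}$ with $\mathrm{rk}(\mathfrak{s})>\mathrm{rk}(M)$. Define $\mathsf{V}_0=\{u\in\mathrm{Vars}(\varphi)\mid \mathfrak{t}\in\overline{M}u\}$; $\mathsf{V}_n=\{u\in\mathrm{Vars}(\varphi)\mid Mu\cap\{Mw\mid w\in\mathsf{V}_{n-1}\}\neq\emptyset\}$ for $n\ge1$; $M_0v=Mv\cup\{\mathfrak{s}\}$ if $v\in\mathsf{V}_0$ and $M_0v=Mv$ otherwise; for $n\ge1$, $M_nv=M_{n-1}v\cup\{M_{n-1}u\mid u\in\mathsf{V}_{n-1},\ Mu\in Mv\}$ if $v\in\mathsf{V}_n$ and $M_nv=M_{n-1}v$ otherwise. Let $k\in\mathbb{N}$. Then: (a) if $\mathsf{V}_k=\emptyset$, then for all $n\ge k$ we have $\mathsf{V}_n=\emptyset$ and $M_n=M_k$; (b) if $\mathsf{V}_k\neq\emptyset$, then $k\le\min(|\mathrm{Vars}(\varphi)|-1,\ 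\mathrm{rk}(M))$.
   Context: A set assignment is a map from a finite set of set variables into the von Neumann universe $\mathcal{V}=\bigcup_\alpha\mathcal{V}_\alpha$, $\mathcal{V}_\alpha=\bigcup_{\beta<\alpha}\mathcal{P}(\mathcal{V}_\beta)$; it satisfies $x\in y$ iff $Mx\in My$ and $x=y\setminus z$ iff $Mx=My\setminus Mz$. The rank $\mathrm{rk}(s)$ of a set $s$ is the least ordinal $\alpha$ with $s\subseteq\mathcal{V}_\alpha$, and $\mathrm{rk}(M)=\max\{\mathrm{rk}(Mx)\mid x\in\mathrm{dom}(M)\}$. *)

theory Defs
  imports Main
begin

text \<open>An abstract universe of sets: a carrier type 'v with an extension map elts
  (x \<in> y is modelled as x \<in> elts y).\<close>

definition set_universe :: "('v \<Rightarrow> 'v set) \<Rightarrow> bool" where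
  "set_universe elts \<longleftrightarrow>
     inj elts
   \<and> wf {(a, b). a \<in> elts b}
   \<and> (\<exists>e. elts e = {})
   \<and> (\<forall>y z. \<exists>x. elts x = elts y - elts z)
   \<and> (\<forall>y F. finite F \<longrightarrow> (\<exists>x. elts x = elts y \<union> F))"

definition set_of :: "('v \<Rightarrow> 'v set) \<Rightarrow> 'v set \<Rightarrow> 'v" where
  "set_of elts A = (THE w. elts w = A)"

text \<open>Rank comparisons: rank_lt a b means rk a < rk b, rank_le a b means rk a \<le> rk b,
  via the recursion rk a = sup {rk d + 1 | d \<in> a}.\<close>
inductive rank_lt :: "('v \<Rightarrow> 'v set) \<Rightarrow> 'v \<Rightarrow> 'v \<Rightarrow> bool"
  and rank_le :: "('v \<Rightarrow> 'v set) \<Rightarrow> 'v \<Rightarrow> 'v \<Rightarrow> bool"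
  for elts :: "'v \<Rightarrow> 'v set" where
  rank_ltI: "c \<in> elts b \<Longrightarrow> rank_le elts a c \<Longrightarrow> rank_lt elts a b"
| rank_leI: "(\<forall>d\<in>elts a. rank_lt elts d c) \<Longrightarrow> rank_le elts a c"

text \<open>rank_ge elts a n means rk a \<ge> n for a natural number n.\<close>
primrec rank_ge :: "('v \<Rightarrow> 'v set) \<Rightarrow> 'v \<Rightarrow> nat \<Rightarrow> bool" where
  "rank_ge elts a 0 = True"
| "rank_ge elts a (Suc n) = (\<exists>b\<in>elts a. rank_ge elts b n)"

datatype 'x lit = Mem 'x 'x | Diff 'x 'x 'x

fun lit_vars :: "'x lit \<Rightarrow> 'x set" where
  "lit_vars (Mem x y) = {x, y}"
| "lit_vars (Diff x y z) = {x, y, z}"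

definition Vars :: "'x lit list \<Rightarrow> 'x set" where
  "Vars \<phi> = (\<Union>l\<in>set \<phi>. lit_vars l)"

fun sat_lit :: "('v \<Rightarrow> 'v set) \<Rightarrow> ('x \<Rightarrow> 'v) \<Rightarrow> 'x lit \<Rightarrow> bool" where
  "sat_lit elts M (Mem x y) = (M x \<in> elts (M y))"
| "sat_lit elts M (Diff x y z) = (elts (M x) = elts (M y) - elts (M z))"

definition sat :: "('v \<Rightarrow> 'v set) \<Rightarrow> ('x \<Rightarrow> 'v) \<Rightarrow> 'x lit list \<Rightarrow> bool" where
  "sat elts M \<phi> \<longleftrightarrow> (\<forall>l\<in>set \<phi>. sat_lit elts M l)"

text \<open>rk(s) > rk(M) = max of rk(M x) over x \<in> Vars.\<close>
definition rank_gt_assignment :: "('v \<Rightarrow> 'v set) \<Rightarrow> 'v \<Rightarrow> ('x \<Rightarrow> 'v) \<Rightarrow> 'x set \<Rightarrow> bool" where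
  "rank_gt_assignment elts s M D \<longleftrightarrow> (\<forall>x\<in>D. rank_lt elts (M x) s)"

text \<open>k \<le> rk(M) for natural k.\<close>
definition rank_assignment_ge :: "('v \<Rightarrow> 'v set) \<Rightarrow> ('x \<Rightarrow> 'v) \<Rightarrow> 'x set \<Rightarrow> nat \<Rightarrow> bool" where
  "rank_assignment_ge elts M D k \<longleftrightarrow> (\<exists>x\<in>D. rank_ge elts (M x) k)"

primrec Vset :: "('v \<Rightarrow> 'v set) \<Rightarrow> 'x lit list \<Rightarrow> ('x \<Rightarrow> 'v) \<Rightarrow> ('x \<Rightarrow> 'v) \<Rightarrow> 'v \<Rightarrow> nat \<Rightarrow> 'x set" where
  "Vset elts \<phi> M Mb t 0 = {u \<in> Vars \<phi>. t \<in> elts (Mb u)}"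
| "Vset elts \<phi> M Mb t (Suc n) =
     {u \<in> Vars \<phi>. elts (M u) \<inter> {M w | w. w \<in> Vset elts \<phi> M Mb t n} \<noteq> {}}"

primrec Mseq :: "('v \<Rightarrow> 'v set) \<Rightarrow> 'x lit list \<Rightarrow> ('x \<Rightarrow> 'v) \<Rightarrow> ('x \<Rightarrow> 'v) \<Rightarrow> 'v \<Rightarrow> 'v
                   \<Rightarrow> nat \<Rightarrow> 'x \<Rightarrow> 'v" where
  "Mseq elts \<phi> M Mb t s 0 = (\<lambda>v. if v \<in> Vset elts \<phi> M Mb t 0
        then set_of elts (elts (M v) \<union> {s}) else M v)"
| "Mseq elts \<phi> M Mb t s (Suc n) = (\<lambda>v. if v \<in> Vset elts \<phi> M Mb t (Suc n)
        then set_of elts (elts (Mseq elts \<phi> M Mb t s n v) \<union>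
               {Mseq elts \<phi> M Mb t s n u | u. u \<in> Vset elts \<phi> M Mb t n \<and> M u \<in> elts (M v)})
        else Mseq elts \<phi> M Mb t s n v)"

end

theory Submission
  imports Defs
begin

text \<open>V_(n+1) is determined by V_n, and M_(n+1) differs from M_n only on V_(n+1), so an
  empty V_k stops both sequences.  If V_k is nonempty, unfolding the definition of V_k
  backwards from one of its elements yields variables u_0, ..., u_k with
  M u_0 \<in> M u_1 \<in> ... \<in> M u_k.  This membership chain gives rk(M u_k) \<ge> k, and by
  well-foundedness of \<in> its values are pairwise distinct, so the u_i are k + 1 distinct
  variables of \<phi>.\<close>

lemma finite_Vars: "finite (Vars \<phi>)"
proof -
  have "finite (lit_vars l)" for l :: "'x lit"
    by (cases l) auto
  then show ?thesis
    unfolding Vars_def by blast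
qed

lemma Vset_subset_Vars: "Vset elts \<phi> M Mb t k \<subseteq> Vars \<phi>"
  by (cases k) auto

lemma Vset_empty_mono:
  assumes "Vset elts \<phi> M Mb t k = {}" and "k \<le> n"
  shows "Vset elts \<phi> M Mb t n = {}"
  using assms(2,1) by (induction n rule: dec_induct) auto

lemma Mseq_eq_if_Vset_empty:
  assumes "Vset elts \<phi> M Mb t k = {}" and "k \<le> n"
  shows "Mseq elts \<phi> M Mb t s n = Mseq elts \<phi> M Mb t s k"
  using assms(2)
proof (induction n rule: dec_induct)
  case base
  then show ?case ..
next
  case (step n)
  then have "Vset elts \<phi> M Mb t (Suc n) = {}"
    using Vset_empty_mono[OF assms(1)] by simp
  with step.IH show ?case
    by (simp del: Vset.simps)
qed

lemma rank_ge_if_in_Vset: "u \<in> Vset elts \<phi> M Mb t k \<Longrightarrow> rank_ge elts (M u) k"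
  by (induction k arbitrary: u) auto

lemma Vset_chain:
  assumes "u \<in> Vset elts \<phi> M Mb t k"
  shows "\<exists>f. f k = u \<and> (\<forall>i\<le>k. f i \<in> Vars \<phi>) \<and> (\<forall>i<k. M (f i) \<in> elts (M (f (Suc i))))"
  using assms
proof (induction k arbitrary: u)
  case 0
  then have "u \<in> Vars \<phi>"
    by (rule subsetD[OF Vset_subset_Vars])
  then show ?case
    by (intro exI[of _ "\<lambda>_. u"]) simp
next
  case (Suc k)
  then obtain w where w: "w \<in> Vset elts \<phi> M Mb t k" "M w \<in> elts (M u)"
    by auto
  from Suc.IH[OF w(1)] obtain f where f: "f k = w" "\<forall>i\<le>k. f i \<in> Vars \<phi>"
    "\<forall>i<k. M (f i) \<in> elts (M (f (Suc i)))"
    by blast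
  have "u \<in> Vars \<phi>"
    using Suc.prems by (rule subsetD[OF Vset_subset_Vars])
  with f w show ?case
    by (intro exI[of _ "f(Suc k := u)"]) (auto simp: le_Suc_eq less_Suc_eq)
qed

lemma chain_in_trancl:
  assumes chain: "\<forall>i<k. (g i, g (Suc i)) \<in> R" and "i < j" and "j \<le> k"
  shows "(g i, g j) \<in> R\<^sup>+"
proof -
  have "Suc i \<le> j"
    using \<open>i < j\<close> by simp
  then show ?thesis
    using \<open>j \<le> k\<close>
  proof (induction j rule: dec_induct)
    case base
    then show ?case
      using chain by auto
  next
    case (step j)
    then have "(g i, g j) \<in> R\<^sup>+" and "(g j, g (Suc j)) \<in> R"
      using chain by auto
    then show ?case
      by (rule trancl_into_trancl)
  qed
qed

lemma wf_chain_inj_on: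
  assumes "wf R" and chain: "\<forall>i<k. (g i, g (Suc i)) \<in> R"
  shows "inj_on g {..k}"
proof (rule linorder_inj_onI')
  fix i j
  assume "i \<in> {..k}" "j \<in> {..k}" "i < j"
  then have "(g i, g j) \<in> R\<^sup>+"
    by (intro chain_in_trancl[OF chain]) auto
  with wf_acyclic[OF \<open>wf R\<close>] show "g i \<noteq> g j"
    by (auto simp: acyclic_def)
qed

lemma Vset_nonempty_less_card_Vars:
  assumes "wf {(a, b). a \<in> elts b}" and "Vset elts \<phi> M Mb t k \<noteq> {}"
  shows "k < card (Vars \<phi>)"
proof -
  from assms(2) obtain u where "u \<in> Vset elts \<phi> M Mb t k"
    by blast
  from Vset_chain[OF this] obtain f
    where f: "\<forall>i\<le>k. f i \<in> Vars \<phi>" "\<forall>i<k. M (f i) \<in> elts (M (f (Suc i)))"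
    by blast
  have "inj_on (M \<circ> f) {..k}"
    using f(2) by (intro wf_chain_inj_on[OF assms(1)]) simp
  then have "inj_on f {..k}"
    by (rule inj_on_imageI2)
  moreover have "f ` {..k} \<subseteq> Vars \<phi>"
    using f(1) by auto
  ultimately have "card {..k} \<le> card (Vars \<phi>)"
    using finite_Vars by (rule card_inj_on_le)
  then show ?thesis
    by (simp only: card_atMost Suc_le_eq)
qed

theorem lemma3:
  fixes elts :: "'v \<Rightarrow> 'v set" and \<phi> :: "'x lit list"
    and M Mb :: "'x \<Rightarrow> 'v" and xb yb :: 'x and t s :: 'v and k :: nat
  assumes U: "set_universe elts"
    and satM: "sat elts M \<phi>"
    and xb: "xb \<in> Vars \<phi>" and yb: "yb \<in> Vars \<phi>"
    and satMb: "sat elts Mb \<phi>"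
    and neq: "Mb xb \<noteq> Mb yb"
    and t: "(t \<in> elts (Mb xb)) \<noteq> (t \<in> elts (Mb yb))"
    and s: "rank_gt_assignment elts s M (Vars \<phi>)"
  shows "(Vset elts \<phi> M Mb t k = {} \<longrightarrow>
            (\<forall>n\<ge>k. Vset elts \<phi> M Mb t n = {} \<and>
                    Mseq elts \<phi> M Mb t s n = Mseq elts \<phi> M Mb t s k))
       \<and> (Vset elts \<phi> M Mb t k \<noteq> {} \<longrightarrow>
            k \<le> card (Vars \<phi>) - 1 \<and> rank_assignment_ge elts M (Vars \<phi>) k)"
proof (intro conjI impI allI)
  fix n
  assume "Vset elts \<phi> M Mb t k = {}" and "k \<le> n"
  then show "Vset elts \<phi> M Mb t n = {}"
    by (rule Vset_empty_mono)
next
  fix n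
  assume "Vset elts \<phi> M Mb t k = {}" and "k \<le> n"
  then show "Mseq elts \<phi> M Mb t s n = Mseq elts \<phi> M Mb t s k"
    by (rule Mseq_eq_if_Vset_empty)
next
  assume nonempty: "Vset elts \<phi> M Mb t k \<noteq> {}"
  have "wf {(a, b). a \<in> elts b}"
    using U unfolding set_universe_def by simp
  then have "k < card (Vars \<phi>)"
    using nonempty by (rule Vset_nonempty_less_card_Vars)
  then show "k \<le> card (Vars \<phi>) - 1"
    by linarith
  show "rank_assignment_ge elts M (Vars \<phi>) k"
    using nonempty rank_ge_if_in_Vset Vset_subset_Vars
    unfolding rank_assignment_ge_def by fast
qed

end
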